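(* Let $G=(V,w,m)$ be a locally finite weighted graph, let $x,z\in V$ with $d(x,z)=2$, and let $f:V\to\mathbb R$ satisfy $$\frac{f(x)+f(z)}2=\frac{\sum_{y:\,x\sim y\sim z}f(y)\,w(x,y)w(y,z)/m(y)}{\sum_{y:\,x\sim y\sim z}w(x,y)w(y,z)/m(y)}.$$ Then for every $r\neq0$, $\Gamma_2f(x)<\Gamma_2\big(f+r\mathbf 1_{\{z\}}\big)(x)$.
   Context: A weighted graph is $G=(V,w,m)$ with $V$ countable, $w:V\times V\to[0,\infty)$ symmetric with $w(x,x)=0$, $m:V\to(0,\infty)$; $x\sim y$ iff $w(x,y)>0$. Laplacian $\Delta f(x)=\frac1{m(x)}\sum_yw(x,y)(f(y)-f(x))$. $d$ is the combinatorial distance. $2\Gamma(f,g)=\Delta(fg)-f\Delta g-g\Delta f$, $2\Gamma_2(f,g)=\Delta\Gamma(f,g)-\Gamma(f,\Delta g)-\Gamma(g,\Delta f)$, $\Gamma_2f=\Gamma_2(f,f)$. $\mathbf 1_{\{z\}}$ is the indicator function of $\{z\}$. *)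

theory Defs
  imports "HOL-Analysis.Analysis" "HOL-Library.Extended_Nat"
begin

definition weighted_graph :: "('a::countable \<Rightarrow> 'a \<Rightarrow> real) \<Rightarrow> ('a \<Rightarrow> real) \<Rightarrow> bool" where
  "weighted_graph w m \<longleftrightarrow>
     (\<forall>x y. w x y = w y x) \<and> (\<forall>x y. 0 \<le> w x y) \<and> (\<forall>x. w x x = 0) \<and> (\<forall>x. 0 < m x)"

definition locally_finite :: "('a \<Rightarrow> 'a \<Rightarrow> real) \<Rightarrow> bool" where
  "locally_finite w \<longleftrightarrow> (\<forall>x. finite {y. 0 < w x y})"

definition lap :: "('a \<Rightarrow> 'a \<Rightarrow> real) \<Rightarrow> ('a \<Rightarrow> real) \<Rightarrow> ('a \<Rightarrow> real) \<Rightarrow> 'a \<Rightarrow> real" where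
  "lap w m f x = (1 / m x) * (\<Sum>y\<in>{y. 0 < w x y}. w x y * (f y - f x))"

definition Gam :: "('a \<Rightarrow> 'a \<Rightarrow> real) \<Rightarrow> ('a \<Rightarrow> real) \<Rightarrow> ('a \<Rightarrow> real) \<Rightarrow> ('a \<Rightarrow> real) \<Rightarrow> 'a \<Rightarrow> real" where
  "Gam w m f g x = (lap w m (\<lambda>v. f v * g v) x - f x * lap w m g x - g x * lap w m f x) / 2"

definition Gam2 :: "('a \<Rightarrow> 'a \<Rightarrow> real) \<Rightarrow> ('a \<Rightarrow> real) \<Rightarrow> ('a \<Rightarrow> real) \<Rightarrow> ('a \<Rightarrow> real) \<Rightarrow> 'a \<Rightarrow> real" where
  "Gam2 w m f g x = (lap w m (Gam w m f g) x - Gam w m f (lap w m g) x - Gam w m g (lap w m f) x) / 2"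

inductive walk :: "('a \<Rightarrow> 'a \<Rightarrow> real) \<Rightarrow> nat \<Rightarrow> 'a \<Rightarrow> 'a \<Rightarrow> bool" for w where
  walk0: "walk w 0 x x"
| walkS: "0 < w x y \<Longrightarrow> walk w n y z \<Longrightarrow> walk w (Suc n) x z"

definition comb_dist :: "('a \<Rightarrow> 'a \<Rightarrow> real) \<Rightarrow> 'a \<Rightarrow> 'a \<Rightarrow> enat" where
  "comb_dist w x y = (if \<exists>n. walk w n x y then enat (LEAST n. walk w n x y) else \<infinity>)"

end

theory Submission imports Defs begin

text \<open>Both sides are quadratic in \<open>r\<close>: with \<open>e = indicator {z}\<close>,
  \<open>\<Gamma>\<^sub>2(f + r e)(x) = \<Gamma>\<^sub>2 f(x) + 2 r \<Gamma>\<^sub>2(f, e)(x) + r\<^sup>2 \<Gamma>\<^sub>2 e(x)\<close>.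
  Since \<open>z\<close> is neither \<open>x\<close> nor a neighbour of \<open>x\<close>, only two-step paths \<open>x \<sim> y \<sim> z\<close> contribute,
  and one computes \<open>\<Gamma>\<^sub>2(f, e)(x)\<close> as a multiple of
  \<open>\<Sum>\<^sub>y w(x,y) w(y,z) / m(y) \<cdot> ((f(x) + f(z))/2 - f(y))\<close>, which the hypothesis makes vanish,
  and \<open>\<Gamma>\<^sub>2 e(x)\<close> as a positive multiple of \<open>\<Sum>\<^sub>y w(x,y) w(y,z) / m(y) > 0\<close>.\<close>

lemma Gam_eq_sum:
  "Gam w m f g v = (\<Sum>u\<in>{u. 0 < w v u}. w v u * (f u - f v) * (g u - g v)) / (2 * m v)"
proof -
  let ?N = "{u. 0 < w v u}"
  have "(\<Sum>u\<in>?N. w v u * (f u * g u - f v * g v)) - f v * (\<Sum>u\<in>?N. w v u * (g u - g v))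
        - g v * (\<Sum>u\<in>?N. w v u * (f u - f v)) = (\<Sum>u\<in>?N. w v u * (f u - f v) * (g u - g v))"
    by (simp add: sum_distrib_left sum_subtractf[symmetric] algebra_simps)
  then show ?thesis unfolding Gam_def lap_def
    by (cases "m v = 0") (simp_all add: field_simps)
qed

lemma Gam_commute: "Gam w m f g = Gam w m g f"
  unfolding Gam_eq_sum by (rule ext) (simp add: mult_ac)

lemma Gam2_commute: "Gam2 w m f g x = Gam2 w m g f x"
  unfolding Gam2_def by (simp add: Gam_commute algebra_simps)

lemma lap_add_scaled: "lap w m (\<lambda>v. f v + c * h v) = (\<lambda>x. lap w m f x + c * lap w m h x)"
proof
  fix x
  have "(\<Sum>y\<in>{y. 0 < w x y}. w x y * (f y + c * h y - (f x + c * h x)))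
      = (\<Sum>y\<in>{y. 0 < w x y}. w x y * (f y - f x) + c * (w x y * (h y - h x)))"
    by (rule sum.cong) (simp_all add: algebra_simps)
  also have "\<dots> = (\<Sum>y\<in>{y. 0 < w x y}. w x y * (f y - f x)) + c * (\<Sum>y\<in>{y. 0 < w x y}. w x y * (h y - h x))"
    by (simp add: sum.distrib sum_distrib_left)
  finally show "lap w m (\<lambda>v. f v + c * h v) x = lap w m f x + c * lap w m h x"
    unfolding lap_def by (simp add: algebra_simps)
qed

lemma Gam_add_scaled_left:
  "Gam w m (\<lambda>v. f v + c * h v) g = (\<lambda>x. Gam w m f g x + c * Gam w m h g x)"
proof
  fix v
  have "(\<Sum>u\<in>{u. 0 < w v u}. w v u * (f u + c * h u - (f v + c * h v)) * (g u - g v))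
      = (\<Sum>u\<in>{u. 0 < w v u}. w v u * (f u - f v) * (g u - g v) + c * (w v u * (h u - h v) * (g u - g v)))"
    by (rule sum.cong) (simp_all add: algebra_simps)
  also have "\<dots> = (\<Sum>u\<in>{u. 0 < w v u}. w v u * (f u - f v) * (g u - g v))
      + c * (\<Sum>u\<in>{u. 0 < w v u}. w v u * (h u - h v) * (g u - g v))"
    by (simp add: sum.distrib sum_distrib_left)
  finally show "Gam w m (\<lambda>v. f v + c * h v) g v = Gam w m f g v + c * Gam w m h g v"
    unfolding Gam_eq_sum by (simp add: algebra_simps add_divide_distrib)
qed

lemma Gam_add_scaled_right:
  "Gam w m g (\<lambda>v. f v + c * h v) = (\<lambda>x. Gam w m g f x + c * Gam w m g h x)"
  by (metis Gam_commute Gam_add_scaled_left)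

lemma Gam2_add_scaled_left:
  "Gam2 w m (\<lambda>v. f v + c * h v) g x = Gam2 w m f g x + c * Gam2 w m h g x"
  unfolding Gam2_def Gam_add_scaled_left Gam_add_scaled_right lap_add_scaled
  by (simp add: field_simps)

lemma Gam2_add_scaled_self:
  "Gam2 w m (\<lambda>v. f v + r * h v) (\<lambda>v. f v + r * h v) x
     = Gam2 w m f f x + 2 * r * Gam2 w m f h x + r\<^sup>2 * Gam2 w m h h x"
  by (simp add: Gam2_add_scaled_left Gam2_commute[of w m _ "\<lambda>v. f v + r * h v"]
      Gam2_commute[of w m h f] power2_eq_square algebra_simps)

inductive_cases walk_SucE: "walk w (Suc n) x z"
inductive_cases walk_0E: "walk w 0 x z"

lemma comb_dist_eq_2D:
  assumes "comb_dist w x z = 2"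
  shows "x \<noteq> z" "\<not> 0 < w x z" "\<exists>y. 0 < w x y \<and> 0 < w y z"
proof -
  have ex: "\<exists>n. walk w n x z"
    using assms unfolding comb_dist_def by (metis infinity_ne_i1 numeral_ne_infinity)
  then have least: "(LEAST n. walk w n x z) = 2"
    using assms unfolding comb_dist_def by (simp, metis enat.inject enat_numeral)
  show "x \<noteq> z"
  proof
    assume "x = z"
    then have "walk w 0 x z" by (simp add: walk0)
    then have "(LEAST n. walk w n x z) \<le> 0" by (rule Least_le)
    with least show False by simp
  qed
  show "\<not> 0 < w x z"
  proof
    assume "0 < w x z"
    then have "(LEAST n. walk w n x z) \<le> 1" using walkS[OF _ walk0] by (intro Least_le) simp
    with least show False by simp
  qed
  have "walk w (Suc (Suc 0)) x z"
    using LeastI_ex[OF ex] least by (simp add: numeral_2_eq_2)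
  then show "\<exists>y. 0 < w x y \<and> 0 < w y z" by (auto elim!: walk_SucE walk_0E)
qed

lemma sum_neighbours_indicator:
  assumes "finite {u. 0 < w y u}" and "0 \<le> w y z"
  shows "(\<Sum>u\<in>{u. 0 < w y u}. w y u * indicator {z} u * t u) = w y z * (t z :: real)"
proof -
  have "(\<Sum>u\<in>{u. 0 < w y u}. w y u * indicator {z} u * t u)
      = (\<Sum>u\<in>{u. 0 < w y u}. if u = z then w y z * t z else 0)"
    by (rule sum.cong) auto
  also have "\<dots> = w y z * t z"
    using assms by (simp add: sum.delta')
  finally show ?thesis .
qed

context
  fixes w :: "'a::countable \<Rightarrow> 'a \<Rightarrow> real" and m :: "'a \<Rightarrow> real"
  assumes graph: "weighted_graph w m" and loc_fin: "locally_finite w"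
begin

lemma lap_indicator:
  assumes "y \<noteq> z"
  shows "lap w m (indicator {z}) y = w y z / m y"
proof -
  have "(\<Sum>u\<in>{u. 0 < w y u}. w y u * (indicator {z} u - indicator {z} y))
      = (\<Sum>u\<in>{u. 0 < w y u}. w y u * indicator {z} u * 1)"
    using assms by simp
  also have "\<dots> = w y z * 1"
    using graph loc_fin unfolding weighted_graph_def locally_finite_def
    by (intro sum_neighbours_indicator) blast+
  finally show ?thesis unfolding lap_def by simp
qed

lemma Gam_indicator:
  assumes "y \<noteq> z"
  shows "Gam w m h (indicator {z}) y = w y z * (h z - h y) / (2 * m y)"
proof -
  have "(\<Sum>u\<in>{u. 0 < w y u}. w y u * (h u - h y) * (indicator {z} u - indicator {z} y))
      = (\<Sum>u\<in>{u. 0 < w y u}. w y u * indicator {z} u * (h u - h y))"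
    using assms by (intro sum.cong) (simp_all add: algebra_simps)
  also have "\<dots> = w y z * (h z - h y)"
    using graph loc_fin unfolding weighted_graph_def locally_finite_def
    by (intro sum_neighbours_indicator) blast+
  finally show ?thesis unfolding Gam_eq_sum by simp
qed

lemma Gam2_indicator_dist2:
  assumes "x \<noteq> z" and "\<not> 0 < w x z"
  shows "Gam2 w m f (indicator {z}) x
    = (\<Sum>y\<in>{y. 0 < w x y \<and> 0 < w y z}. w x y * w y z / m y * ((f x + f z) / 2 - f y)) / (2 * m x)"
proof -
  let ?e = "indicator {z} :: 'a \<Rightarrow> real" and ?N = "{y. 0 < w x y}"
  have nonneg: "0 \<le> w a b" and mpos: "0 < m a" for a b
    using graph by (auto simp: weighted_graph_def)
  have "w x z = 0" using assms(2) nonneg[of x z] by simp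
  then have at_x: "lap w m ?e x = 0" "Gam w m h ?e x = 0" for h
    using assms(1) by (simp_all add: lap_indicator Gam_indicator)
  have nbr: "y \<noteq> z" if "y \<in> ?N" for y using that assms(2) by auto
  have "lap w m (Gam w m f ?e) x = (\<Sum>y\<in>?N. w x y * w y z * (f z - f y) / (2 * m y)) / m x"
    unfolding lap_def using nbr by (simp add: at_x Gam_indicator algebra_simps)
  moreover have "Gam w m f (lap w m ?e) x = (\<Sum>y\<in>?N. w x y * w y z * (f y - f x) / m y) / (2 * m x)"
    unfolding Gam_eq_sum using nbr by (simp add: at_x lap_indicator algebra_simps diff_divide_distrib)
  moreover have "Gam w m ?e (lap w m f) x = 0"
    using at_x Gam_commute by metis
  moreover have "(\<Sum>y\<in>?N. w x y * w y z / m y * ((f x + f z) / 2 - f y))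
      = (\<Sum>y\<in>?N. w x y * w y z * (f z - f y) / (2 * m y))
        - (\<Sum>y\<in>?N. w x y * w y z * (f y - f x) / m y) / 2"
    unfolding sum_divide_distrib sum_subtractf[symmetric]
    by (rule sum.cong) (simp_all add: diff_divide_distrib add_divide_distrib algebra_simps)
  ultimately have "Gam2 w m f ?e x
      = (\<Sum>y\<in>?N. w x y * w y z / m y * ((f x + f z) / 2 - f y)) / (2 * m x)"
    unfolding Gam2_def using mpos[of x] by (simp add: field_simps)
  also have "(\<Sum>y\<in>?N. w x y * w y z / m y * ((f x + f z) / 2 - f y))
      = (\<Sum>y\<in>{y. 0 < w x y \<and> 0 < w y z}. w x y * w y z / m y * ((f x + f z) / 2 - f y))"
    using loc_fin nonneg unfolding locally_finite_def
    by (intro sum.mono_neutral_right) (auto simp: less_le)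
  finally show ?thesis .
qed

end

lemma sum_weighted_deviation_eq_0:
  assumes "c = (\<Sum>y\<in>A. g y * a y) / (\<Sum>y\<in>A. a y)" and "(\<Sum>y\<in>A. a y) \<noteq> (0::real)"
  shows "(\<Sum>y\<in>A. a y * (c - g y)) = 0"
proof -
  have "(\<Sum>y\<in>A. a y * (c - g y)) = c * (\<Sum>y\<in>A. a y) - (\<Sum>y\<in>A. g y * a y)"
    by (simp add: sum_subtractf sum_distrib_left right_diff_distrib mult.commute)
  then show ?thesis using assms by simp
qed

theorem lemma3:
  fixes w :: "'a::countable \<Rightarrow> 'a \<Rightarrow> real" and m :: "'a \<Rightarrow> real"
    and f :: "'a \<Rightarrow> real" and x z :: 'a
  assumes "weighted_graph w m"
    and "locally_finite w"
    and "comb_dist w x z = 2"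
    and "(f x + f z) / 2 =
           (\<Sum>y\<in>{y. 0 < w x y \<and> 0 < w y z}. f y * w x y * w y z / m y) /
           (\<Sum>y\<in>{y. 0 < w x y \<and> 0 < w y z}. w x y * w y z / m y)"
  shows "\<forall>r::real. r \<noteq> 0 \<longrightarrow>
           Gam2 w m f f x < Gam2 w m (\<lambda>v. f v + r * indicator {z} v) (\<lambda>v. f v + r * indicator {z} v) x"
proof (intro allI impI)
  fix r :: real
  assume "r \<noteq> 0"
  let ?S = "{y. 0 < w x y \<and> 0 < w y z}" and ?e = "indicator {z} :: 'a \<Rightarrow> real"
  let ?a = "\<lambda>y. w x y * w y z / m y"
  have mpos: "\<And>a. 0 < m a" and no_loops: "\<And>a. w a a = 0"
    using assms(1) by (simp_all add: weighted_graph_def)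
  obtain "x \<noteq> z" "\<not> 0 < w x z" "?S \<noteq> {}"
    using comb_dist_eq_2D[OF assms(3)] by auto
  moreover have "finite ?S"
    using assms(2) unfolding locally_finite_def by (auto intro: finite_subset[of _ "{y. 0 < w x y}"])
  ultimately have a_pos: "0 < sum ?a ?S"
    by (intro sum_pos) (auto simp: mpos)
  have "(\<Sum>y\<in>?S. ?a y * ((f x + f z) / 2 - f y)) = 0"
    using a_pos assms(4) by (intro sum_weighted_deviation_eq_0) (simp_all add: ac_simps)
  then have mixed: "Gam2 w m f ?e x = 0"
    using Gam2_indicator_dist2[OF assms(1,2) \<open>x \<noteq> z\<close> \<open>\<not> 0 < w x z\<close>] by simp
  have "(\<Sum>y\<in>?S. ?a y * ((?e x + ?e z) / 2 - ?e y)) = sum ?a ?S / 2"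
    using \<open>x \<noteq> z\<close> no_loops[of z] by (auto simp: sum_divide_distrib indicator_def intro!: sum.cong)
  then have "0 < Gam2 w m ?e ?e x"
    using Gam2_indicator_dist2[OF assms(1,2) \<open>x \<noteq> z\<close> \<open>\<not> 0 < w x z\<close>] a_pos mpos[of x] by simp
  with \<open>r \<noteq> 0\<close> show "Gam2 w m f f x < Gam2 w m (\<lambda>v. f v + r * ?e v) (\<lambda>v. f v + r * ?e v) x"
    unfolding Gam2_add_scaled_self mixed by simp
qed

end
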